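(* Let $G$ be a finite Coxeter group acting by its geometric realisation on a Euclidean space $V$, with set of simple reflections $S$ and simple roots $e_s$, $s\in S$. Let $J\subset S$ satisfy the $(-1)$-condition and let $\sigma_J$ be the corresponding involution. Then the centraliser $C(\sigma_J)=\{g\in G: g\sigma_J=\sigma_J g\}$ coincides with the normaliser $N(G_J)=\{g\in G: gG_Jg^{-1}=G_J\}$ of the parabolic subgroup $G_J$.
   Context: For $J\subset S$, $G_J$ is the subgroup generated by $J$ and $V_J$ is the subspace of $V$ spanned by $\{e_s: s\in J\}$. $J$ satisfies the $(-1)$-condition if $G_J$ contains an element $\sigma_J$ acting on $V_J$ as $-\mathrm{Id}$; this element acts as the identity on $V_J^\perp$, is uniquely determined and is an involution. *)

theory Defs
  imports "HOL-Analysis.Analysis"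
begin

definition reflection :: "'a::real_inner \<Rightarrow> 'a \<Rightarrow> 'a" where
  "reflection a v = v - (2 * (v \<bullet> a) / (a \<bullet> a)) *\<^sub>R a"

text \<open>The submonoid of maps generated by X under composition. For a finite set of
  involutions generating a finite group this is exactly the generated subgroup.\<close>
inductive_set generated :: "('a \<Rightarrow> 'a) set \<Rightarrow> ('a \<Rightarrow> 'a) set" for X where
  gen_id: "id \<in> generated X"
| gen_step: "x \<in> X \<Longrightarrow> g \<in> generated X \<Longrightarrow> x \<circ> g \<in> generated X"

definition geometric_realisation ::
  "'s set \<Rightarrow> ('s \<Rightarrow> 's \<Rightarrow> nat) \<Rightarrow> ('s \<Rightarrow> 'a::euclidean_space) \<Rightarrow> bool" where
  "geometric_realisation S m e \<longleftrightarrow>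
     finite S \<and> inj_on e S \<and> independent (e ` S) \<and> span (e ` S) = UNIV \<and>
     (\<forall>s\<in>S. e s \<bullet> e s = 1) \<and>
     (\<forall>s\<in>S. \<forall>t\<in>S. s \<noteq> t \<longrightarrow> m s t = m t s \<and> m s t \<ge> 2 \<and>
         e s \<bullet> e t = - cos (pi / real (m s t)))"

definition coxeter_group :: "'s set \<Rightarrow> ('s \<Rightarrow> 'a::real_inner) \<Rightarrow> ('a \<Rightarrow> 'a) set" where
  "coxeter_group J e = generated ((\<lambda>s. reflection (e s)) ` J)"

definition root_span :: "'s set \<Rightarrow> ('s \<Rightarrow> 'a::real_vector) \<Rightarrow> 'a set" where
  "root_span J e = span (e ` J)"

end

theory Submission
  imports Defs
begin

text \<open>
  Write \<open>V\<^sub>J\<close> for the span of the simple roots \<open>e s\<close>, \<open>s \<in> J\<close>. As a product of reflections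
  in vectors of \<open>V\<^sub>J\<close>, \<open>\<sigma>\<close> fixes the orthogonal complement of \<open>V\<^sub>J\<close> pointwise, and it is
  \<open>-1\<close> on \<open>V\<^sub>J\<close>. So \<open>V\<^sub>J\<close> is the \<open>-1\<close>-eigenspace of \<open>\<sigma>\<close>, and a linear map commutes with
  \<open>\<sigma>\<close> as soon as it preserves \<open>V\<^sub>J\<close> and its complement.

  If \<open>g\<close> normalises \<open>G\<^sub>J\<close>, then \<open>g\<close> and \<open>g\<^sup>-\<^sup>1\<close> permute the common fixed space of \<open>G\<^sub>J\<close>,
  which is the orthogonal complement of \<open>V\<^sub>J\<close>, so \<open>g\<close> commutes with \<open>\<sigma>\<close>. If \<open>g\<close> commutes
  with \<open>\<sigma>\<close>, then for \<open>t \<in> J\<close> the root \<open>g (e t)\<close> lies in \<open>V\<^sub>J\<close>, and \<open>g r\<^sub>t g\<^sup>-\<^sup>1\<close> is the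
  reflection in it. A root lying in \<open>V\<^sub>J\<close> has its reflection in \<open>G\<^sub>J\<close>: for a positive root
  \<open>\<alpha>\<close> pick a simple root \<open>e u\<close> with \<open>\<alpha> \<bullet> e u > 0\<close> occurring in \<open>\<alpha>\<close> (then \<open>u \<in> J\<close>); reflecting
  \<open>\<alpha>\<close> in \<open>e u\<close> gives a positive root of smaller height, and \<open>r\<^sub>\<alpha>\<close> is the \<open>r\<^sub>u\<close>-conjugate of
  its reflection. This uses that every root is a nonnegative or nonpositive combination of
  simple roots, proved by Deodhar's induction on length, which reduces it to the dihedral
  subgroups generated by two simple reflections (Humphreys, Reflection Groups and Coxeter
  Groups, Thm. 5.4).
\<close>

lemma linear_reflection: "linear (reflection a)"
  unfolding reflection_def
  by (intro linearI) (simp_all add: inner_add_left add_divide_distrib algebra_simps)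

lemma reflection_self: "reflection a a = - a"
  unfolding reflection_def by (simp add: scaleR_2 algebra_simps)

lemma reflection_reflection:
  fixes a :: "'a::real_inner"
  assumes "a \<noteq> 0"
  shows "reflection a (reflection a x) = x"
  using assms unfolding reflection_def
  by (simp add: inner_diff_left field_simps scaleR_diff_left[symmetric])

lemma reflection_comp_reflection: "(a::'a::real_inner) \<noteq> 0 \<Longrightarrow> reflection a \<circ> reflection a = id"
  by (auto simp: reflection_reflection)

lemma inv_reflection: "(a::'a::real_inner) \<noteq> 0 \<Longrightarrow> inv (reflection a) = reflection a"
  using inv_unique_comp reflection_comp_reflection by blast

lemma orthogonal_transformation_reflection:
  fixes a :: "'a::real_inner"
  assumes "a \<noteq> 0"
  shows "orthogonal_transformation (reflection a)"
  unfolding orthogonal_transformation_def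
proof (intro conjI allI linear_reflection)
  fix x y
  have aa: "a \<bullet> a \<noteq> 0" using assms by simp
  define k l where "k = 2 * (x \<bullet> a) / (a \<bullet> a)" and "l = 2 * (y \<bullet> a) / (a \<bullet> a)"
  have "(x - k *\<^sub>R a) \<bullet> (y - l *\<^sub>R a) = x \<bullet> y - l * (x \<bullet> a) - k * (y \<bullet> a) + k * l * (a \<bullet> a)"
    by (simp add: inner_diff_left inner_diff_right inner_commute[of a x] inner_commute[of a y]
        algebra_simps)
  moreover have "k * l * (a \<bullet> a) = l * (x \<bullet> a) + k * (y \<bullet> a)"
    using aa unfolding k_def l_def by (simp add: field_simps)
  ultimately show "reflection a x \<bullet> reflection a y = x \<bullet> y"
    unfolding reflection_def k_def[symmetric] l_def[symmetric] by simp
qed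

lemma reflection_fixed_iff:
  fixes a :: "'a::real_inner"
  assumes "a \<noteq> 0"
  shows "reflection a x = x \<longleftrightarrow> x \<bullet> a = 0"
  using assms unfolding reflection_def by simp

lemma reflection_uminus: "reflection (- a) = reflection a"
  unfolding reflection_def by (simp add: fun_eq_iff)

lemma reflection_conjugate:
  assumes f: "orthogonal_transformation f" "surj f"
  shows "f \<circ> reflection a \<circ> inv f = reflection (f a)"
proof
  fix v
  have "f (inv f v) = v" using f(2) by (simp add: surj_f_inv_f)
  moreover from this have "inv f v \<bullet> a = v \<bullet> f a" and "a \<bullet> a = f a \<bullet> f a"
    using f(1) unfolding orthogonal_transformation_def by metis+
  ultimately show "(f \<circ> reflection a \<circ> inv f) v = reflection (f a) v"
    using f(1) unfolding reflection_def orthogonal_transformation_def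
    by (simp add: linear_diff linear_scale)
qed

lemma orthogonal_decomposition:
  fixes v :: "'a::euclidean_space"
  obtains p q where "p \<in> span B" "\<forall>b\<in>B. q \<bullet> b = 0" "v = p + q"
proof -
  obtain p q where "p \<in> span B" "\<And>w. w \<in> span B \<Longrightarrow> orthogonal q w" "v = p + q"
    by (rule orthogonal_subspace_decomp_exists[of B v]) blast
  moreover from this(2) have "\<forall>b\<in>B. q \<bullet> b = 0"
    by (simp add: orthogonal_def span_base)
  ultimately show ?thesis using that by blast
qed

lemma linear_eq_on_span_and_complement:
  fixes f g :: "'a::euclidean_space \<Rightarrow> 'b::real_vector"
  assumes "linear f" "linear g"
    and "\<And>b. b \<in> B \<Longrightarrow> f b = g b" and "\<And>q. \<forall>b\<in>B. q \<bullet> b = 0 \<Longrightarrow> f q = g q"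
  shows "f = g"
proof
  fix v
  obtain p q where "p \<in> span B" "\<forall>b\<in>B. q \<bullet> b = 0" "v = p + q"
    by (rule orthogonal_decomposition)
  moreover have "f p = g p" using assms(1-3) \<open>p \<in> span B\<close> by (rule linear_eq_on_span)
  ultimately show "f v = g v" using assms by (simp add: linear_add)
qed

lemma in_span_if_orthogonal_to_complement:
  fixes w :: "'a::euclidean_space"
  assumes "\<And>q. \<forall>b\<in>B. q \<bullet> b = 0 \<Longrightarrow> w \<bullet> q = 0"
  shows "w \<in> span B"
proof -
  obtain p q where "p \<in> span B" "\<forall>b\<in>B. q \<bullet> b = 0" "w = p + q"
    by (rule orthogonal_decomposition)
  moreover from this have "p \<bullet> q = 0"
    using orthogonal_to_span[of p B q] by (simp add: orthogonal_def inner_commute)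
  moreover have "w \<bullet> q = 0" using assms \<open>\<forall>b\<in>B. q \<bullet> b = 0\<close> by blast
  ultimately have "q \<bullet> q = 0" by (simp add: inner_add_left)
  with \<open>p \<in> span B\<close> \<open>w = p + q\<close> show ?thesis by simp
qed

lemma neg_eigenvector_in_span:
  fixes \<sigma> :: "'a::euclidean_space \<Rightarrow> 'a"
  assumes "linear \<sigma>" "\<And>v. v \<in> span B \<Longrightarrow> \<sigma> v = - v" "\<And>q. \<forall>b\<in>B. q \<bullet> b = 0 \<Longrightarrow> \<sigma> q = q"
    and "\<sigma> w = - w"
  shows "w \<in> span B"
proof -
  obtain p q where "p \<in> span B" "\<forall>b\<in>B. q \<bullet> b = 0" "w = p + q"
    by (rule orthogonal_decomposition)
  with assms have "- p + q = - p - q" by (simp add: linear_add)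
  then have "q = - q" by simp
  then have "(2::real) *\<^sub>R q = 0" by (metis scaleR_2 eq_neg_iff_add_eq_0)
  then have "q = 0" by simp
  with \<open>p \<in> span B\<close> \<open>w = p + q\<close> show ?thesis by simp
qed

lemma commute_if_preserves_span_and_complement:
  fixes \<sigma> g :: "'a::euclidean_space \<Rightarrow> 'a"
  assumes "linear \<sigma>" "\<And>v. v \<in> span B \<Longrightarrow> \<sigma> v = - v" "\<And>q. \<forall>b\<in>B. q \<bullet> b = 0 \<Longrightarrow> \<sigma> q = q"
    and "linear g" "\<And>v. v \<in> span B \<Longrightarrow> g v \<in> span B"
    and "\<And>q. \<forall>b\<in>B. q \<bullet> b = 0 \<Longrightarrow> \<forall>b\<in>B. g q \<bullet> b = 0"
  shows "g \<circ> \<sigma> = \<sigma> \<circ> g"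
proof (rule linear_eq_on_span_and_complement[of _ _ B])
  show "linear (g \<circ> \<sigma>)" "linear (\<sigma> \<circ> g)" using assms(1,4) by (simp_all add: linear_compose)
  show "(g \<circ> \<sigma>) b = (\<sigma> \<circ> g) b" if "b \<in> B" for b
    using that assms(2,4,5) by (simp add: span_base linear_neg)
  show "(g \<circ> \<sigma>) q = (\<sigma> \<circ> g) q" if "\<forall>b\<in>B. q \<bullet> b = 0" for q
    using that assms(3,6) by simp
qed

definition refl_word :: "('s \<Rightarrow> 'a::real_inner) \<Rightarrow> 's list \<Rightarrow> 'a \<Rightarrow> 'a" where
  "refl_word e ws = foldr (\<lambda>s f. reflection (e s) \<circ> f) ws id"

lemma refl_word_Nil [simp]: "refl_word e [] = id"
  and refl_word_Cons [simp]: "refl_word e (s # ws) = reflection (e s) \<circ> refl_word e ws"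
  by (simp_all add: refl_word_def)

lemma refl_word_append [simp]: "refl_word e (xs @ ys) = refl_word e xs \<circ> refl_word e ys"
  by (induction xs) (simp_all add: comp_assoc)

lemma refl_word_rev_comp:
  assumes "\<forall>s\<in>set ws. e s \<noteq> 0"
  shows "refl_word e (rev ws) \<circ> refl_word e ws = id"
  using assms
proof (induction ws)
  case (Cons s ws)
  have "refl_word e (rev (s # ws)) \<circ> refl_word e (s # ws)
      = refl_word e (rev ws) \<circ> (reflection (e s) \<circ> reflection (e s)) \<circ> refl_word e ws"
    by (simp add: comp_assoc)
  also have "\<dots> = id"
    using Cons by (simp add: reflection_reflection comp_def id_def)
  finally show ?case .
qed simp

lemma linear_refl_word: "linear (refl_word e ws)"
proof (induction ws)
  case Nil
  show ?case by (simp only: refl_word_Nil linear_id)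
next
  case (Cons s ws)
  then show ?case by (simp only: refl_word_Cons linear_compose linear_reflection)
qed

lemma orthogonal_transformation_refl_word:
  "\<forall>s\<in>set ws. e s \<noteq> 0 \<Longrightarrow> orthogonal_transformation (refl_word e ws)"
  by (induction ws)
    (auto simp: id_def orthogonal_transformation_reflection
      intro: orthogonal_transformation_compose)

lemma refl_word_fixes: "\<forall>s\<in>set ws. q \<bullet> e s = 0 \<Longrightarrow> refl_word e ws q = q"
  by (induction ws) (auto simp: reflection_def)

lemma coxeter_group_eq_words: "coxeter_group X e = {refl_word e ws | ws. set ws \<subseteq> X}"
proof (intro equalityI subsetI)
  fix g assume "g \<in> coxeter_group X e"
  then show "g \<in> {refl_word e ws | ws. set ws \<subseteq> X}"
    unfolding coxeter_group_def
  proof (induction rule: generated.induct)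
    case gen_id show ?case by (auto intro!: exI[of _ "[]"])
  next
    case (gen_step x g)
    then obtain s ws where "s \<in> X" "x = reflection (e s)" "set ws \<subseteq> X" "g = refl_word e ws"
      by blast
    then show ?case by (intro CollectI exI[of _ "s # ws"]) simp
  qed
next
  fix g assume "g \<in> {refl_word e ws | ws. set ws \<subseteq> X}"
  then obtain ws where "set ws \<subseteq> X" "g = refl_word e ws" by blast
  then show "g \<in> coxeter_group X e"
    unfolding coxeter_group_def by (induction ws arbitrary: g) (auto intro: generated.intros)
qed

lemma refl_word_in_coxeter_group: "set ws \<subseteq> X \<Longrightarrow> refl_word e ws \<in> coxeter_group X e"
  unfolding coxeter_group_eq_words by blast

lemma obtain_word:
  assumes "g \<in> coxeter_group X e"
  obtains ws where "set ws \<subseteq> X" "g = refl_word e ws"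
  using assms unfolding coxeter_group_eq_words by blast

lemma id_in_coxeter_group: "id \<in> coxeter_group X e"
  unfolding coxeter_group_def by (rule generated.gen_id)

lemma reflection_in_coxeter_group: "s \<in> X \<Longrightarrow> reflection (e s) \<in> coxeter_group X e"
  using refl_word_in_coxeter_group[of "[s]" X e] by simp

lemma coxeter_group_comp:
  assumes "f \<in> coxeter_group X e" "g \<in> coxeter_group X e"
  shows "f \<circ> g \<in> coxeter_group X e"
proof -
  obtain xs ys where "set xs \<subseteq> X" "f = refl_word e xs" "set ys \<subseteq> X" "g = refl_word e ys"
    using obtain_word[OF assms(1)] obtain_word[OF assms(2)] by metis
  then show ?thesis using refl_word_in_coxeter_group[of "xs @ ys" X e] by simp
qed

lemma coxeter_group_mono: "I \<subseteq> X \<Longrightarrow> coxeter_group I e \<subseteq> coxeter_group X e"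
  unfolding coxeter_group_eq_words by blast

lemma coxeter_group_fixes:
  assumes "g \<in> coxeter_group X e" "\<forall>s\<in>X. q \<bullet> e s = 0"
  shows "g q = q"
proof -
  obtain ws where "set ws \<subseteq> X" "g = refl_word e ws"
    using assms(1) by (rule obtain_word)
  with assms(2) show ?thesis by (auto intro: refl_word_fixes)
qed

lemma orthogonal_transformation_coxeter_group:
  assumes "g \<in> coxeter_group X e" "\<forall>s\<in>X. e s \<noteq> 0"
  shows "orthogonal_transformation g"
proof -
  obtain ws where "set ws \<subseteq> X" "g = refl_word e ws"
    using assms(1) by (rule obtain_word)
  with assms(2) show ?thesis by (auto intro: orthogonal_transformation_refl_word)
qed

lemma inv_in_coxeter_group:
  assumes "g \<in> coxeter_group X e" "\<forall>s\<in>X. e s \<noteq> 0"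
  shows "inv g \<in> coxeter_group X e"
proof -
  obtain ws where ws: "set ws \<subseteq> X" "g = refl_word e ws"
    using assms(1) by (rule obtain_word)
  have "g \<circ> refl_word e (rev ws) = id" "refl_word e (rev ws) \<circ> g = id"
    using refl_word_rev_comp[of "rev ws" e] refl_word_rev_comp[of ws e] ws assms(2) by auto
  then have "inv g = refl_word e (rev ws)" by (rule inv_unique_comp)
  then show ?thesis using refl_word_in_coxeter_group[of "rev ws" X e] ws(1) by simp
qed

lemma inv_commute:
  assumes "bij g" "g \<circ> \<sigma> = \<sigma> \<circ> g"
  shows "inv g \<circ> \<sigma> = \<sigma> \<circ> inv g"
proof
  fix x
  have "g (\<sigma> (inv g x)) = \<sigma> x"
    using fun_cong[OF assms(2), of "inv g x"] assms(1) by (simp add: bij_is_surj surj_f_inv_f)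
  then show "(inv g \<circ> \<sigma>) x = (\<sigma> \<circ> inv g) x"
    using bij_inv_eq_iff[OF assms(1), of "\<sigma> (inv g x)" "\<sigma> x"] by simp
qed

lemma conj_image_eq:
  assumes "bij g" "(\<lambda>h. g \<circ> h \<circ> inv g) ` H \<subseteq> H" "(\<lambda>h. inv g \<circ> h \<circ> g) ` H \<subseteq> H"
  shows "(\<lambda>h. g \<circ> h \<circ> inv g) ` H = H"
proof
  show "(\<lambda>h. g \<circ> h \<circ> inv g) ` H \<subseteq> H" by (rule assms(2))
next
  show "H \<subseteq> (\<lambda>h. g \<circ> h \<circ> inv g) ` H"
  proof
    fix h assume "h \<in> H"
    have "h = g \<circ> (inv g \<circ> h \<circ> g) \<circ> inv g"
      using assms(1) by (simp add: fun_eq_iff bij_is_surj surj_f_inv_f)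
    with \<open>h \<in> H\<close> assms(3) show "h \<in> (\<lambda>h. g \<circ> h \<circ> inv g) ` H" by blast
  qed
qed

lemma conj_coxeter_group_subset:
  assumes "bij g" "\<And>s. s \<in> J \<Longrightarrow> g \<circ> reflection (e s) \<circ> inv g \<in> coxeter_group J e"
  shows "(\<lambda>h. g \<circ> h \<circ> inv g) ` coxeter_group J e \<subseteq> coxeter_group J e"
proof clarify
  fix h assume "h \<in> coxeter_group J e"
  then obtain ws where "set ws \<subseteq> J" "h = refl_word e ws" by (rule obtain_word)
  then show "g \<circ> h \<circ> inv g \<in> coxeter_group J e"
  proof (induction ws arbitrary: h)
    case Nil
    then have "g \<circ> h \<circ> inv g = id"
      using assms(1) by (simp add: fun_eq_iff bij_is_surj surj_f_inv_f)
    then show ?case by (simp only: id_in_coxeter_group)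
  next
    case (Cons s ws)
    have "g \<circ> h \<circ> inv g = (g \<circ> reflection (e s) \<circ> inv g) \<circ> (g \<circ> refl_word e ws \<circ> inv g)"
      using Cons.prems(2) assms(1) by (simp add: fun_eq_iff bij_is_inj inv_f_f)
    moreover have "g \<circ> reflection (e s) \<circ> inv g \<in> coxeter_group J e"
      using Cons.prems(1) assms(2) by simp
    moreover have "g \<circ> refl_word e ws \<circ> inv g \<in> coxeter_group J e"
      using Cons.prems(1) by (intro Cons.IH) auto
    ultimately show ?case by (simp only: coxeter_group_comp)
  qed
qed

definition coxeter_length :: "'s set \<Rightarrow> ('s \<Rightarrow> 'a::real_inner) \<Rightarrow> ('a \<Rightarrow> 'a) \<Rightarrow> nat" where
  "coxeter_length X e g = (LEAST n. \<exists>ws. set ws \<subseteq> X \<and> length ws = n \<and> refl_word e ws = g)"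

lemma coxeter_length_le: "set ws \<subseteq> X \<Longrightarrow> refl_word e ws = g \<Longrightarrow> coxeter_length X e g \<le> length ws"
  unfolding coxeter_length_def by (rule Least_le) blast

lemma obtain_reduced_word:
  assumes "g \<in> coxeter_group X e"
  obtains ws where "set ws \<subseteq> X" "length ws = coxeter_length X e g" "refl_word e ws = g"
proof -
  obtain ws where "set ws \<subseteq> X" "g = refl_word e ws"
    using assms by (rule obtain_word)
  then have "\<exists>n ws. set ws \<subseteq> X \<and> length ws = n \<and> refl_word e ws = g" by blast
  then have "\<exists>ws. set ws \<subseteq> X \<and> length ws = coxeter_length X e g \<and> refl_word e ws = g"
    unfolding coxeter_length_def by (rule LeastI_ex)
  with that show ?thesis by blast
qed

lemma coxeter_length_mono:
  assumes "g \<in> coxeter_group I e" "I \<subseteq> X"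
  shows "coxeter_length X e g \<le> coxeter_length I e g"
  by (metis assms obtain_reduced_word coxeter_length_le order_trans)

lemma coxeter_length_comp:
  assumes "f \<in> coxeter_group X e" "g \<in> coxeter_group X e"
  shows "coxeter_length X e (f \<circ> g) \<le> coxeter_length X e f + coxeter_length X e g"
proof -
  obtain xs where "set xs \<subseteq> X" "length xs = coxeter_length X e f" "refl_word e xs = f"
    using assms(1) by (rule obtain_reduced_word)
  moreover obtain ys where "set ys \<subseteq> X" "length ys = coxeter_length X e g" "refl_word e ys = g"
    using assms(2) by (rule obtain_reduced_word)
  ultimately show ?thesis
    using coxeter_length_le[of "xs @ ys" X e "f \<circ> g"] by simp
qed

lemma coxeter_length_reflection: "s \<in> X \<Longrightarrow> coxeter_length X e (reflection (e s)) \<le> 1"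
  using coxeter_length_le[of "[s]" X e] by simp

lemma obtain_shorter_prefix:
  assumes "w \<in> coxeter_group X e" "w \<noteq> id"
  obtains v t where "t \<in> X" "v \<in> coxeter_group X e" "w = v \<circ> reflection (e t)"
    "coxeter_length X e v < coxeter_length X e w"
proof -
  obtain ws where ws: "set ws \<subseteq> X" "length ws = coxeter_length X e w" "refl_word e ws = w"
    using assms(1) by (rule obtain_reduced_word)
  with assms(2) obtain zs t where "ws = zs @ [t]" by (cases ws rule: rev_exhaust) auto
  with ws have "t \<in> X" "refl_word e zs \<in> coxeter_group X e" "w = refl_word e zs \<circ> reflection (e t)"
    "coxeter_length X e (refl_word e zs) < coxeter_length X e w"
    using coxeter_length_le[of zs X e] by (auto intro: refl_word_in_coxeter_group)
  with that show ?thesis by blast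
qed

lemma reduced_word_distinct_adj:
  assumes "set ws \<subseteq> X" "length ws = coxeter_length X e (refl_word e ws)" "\<forall>s\<in>set ws. e s \<noteq> 0"
  shows "distinct_adj ws"
proof (rule ccontr)
  assume "\<not> distinct_adj ws"
  then obtain i where i: "Suc i < length ws" "ws ! i = ws ! Suc i"
    by (auto simp: distinct_adj_conv_nth)
  define xs ys where "xs = take i ws" and "ys = drop (Suc (Suc i)) ws"
  have "ws = xs @ ws ! i # ws ! Suc i # ys"
    using i(1) unfolding xs_def ys_def by (simp add: Cons_nth_drop_Suc)
  then have ws: "ws = xs @ [ws ! i, ws ! i] @ ys" using i(2) by simp
  have "e (ws ! i) \<noteq> 0" using assms(3) i(1) by simp
  then have "refl_word e ws = refl_word e (xs @ ys)"
    by (subst ws) (simp add: fun_eq_iff reflection_reflection)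
  moreover have "set (xs @ ys) \<subseteq> X" using assms(1) by (subst (asm) ws) simp
  ultimately have "coxeter_length X e (refl_word e ws) \<le> length (xs @ ys)"
    by (metis coxeter_length_le)
  also have "\<dots> < length ws" using arg_cong[OF ws, of length] by simp
  finally show False using assms(2) by simp
qed

section \<open>Dihedral subgroups\<close>

fun alt_word :: "nat \<Rightarrow> 's \<Rightarrow> 's \<Rightarrow> 's list" where
  "alt_word 0 x y = []"
| "alt_word (Suc n) x y = alt_word n y x @ [x]"

lemma length_alt_word [simp]: "length (alt_word n x y) = n"
  by (induction n arbitrary: x y) auto

lemma set_alt_word: "set (alt_word n x y) \<subseteq> {x, y}"
  by (induction n arbitrary: x y) auto

lemma drop_alt_word: "j \<le> n \<Longrightarrow> drop j (alt_word n x y) = alt_word (n - j) x y"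
proof (induction n arbitrary: x y)
  case (Suc n)
  show ?case
  proof (cases "j = Suc n")
    case False
    with Suc show ?thesis by (simp add: Suc_diff_le)
  qed simp
qed simp

lemma distinct_adj_eq_alt_word:
  "distinct_adj ws \<Longrightarrow> set ws \<subseteq> {x, y} \<Longrightarrow> ws \<noteq> [] \<Longrightarrow> last ws = x
   \<Longrightarrow> ws = alt_word (length ws) x y"
proof (induction ws arbitrary: x y rule: rev_induct)
  case (snoc a zs)
  show ?case
  proof (cases "zs = []")
    case False
    then have "last zs \<noteq> x" using snoc.prems(1,4) by (simp add: distinct_adj_append_iff)
    then have "last zs = y" using snoc.prems(2) last_in_set[OF False] by auto
    then have "zs = alt_word (length zs) y x"
      using snoc False by (auto simp: distinct_adj_append_iff)
    then show ?thesis using snoc.prems(4) by simp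
  qed (use snoc.prems in simp)
qed simp

lemma alt_word_simple_root:
  fixes e :: "'s \<Rightarrow> 'a::real_inner" and \<theta> :: real
  assumes "e x \<bullet> e x = 1" "e y \<bullet> e y = 1" "e x \<bullet> e y = - cos \<theta>"
  shows "sin \<theta> *\<^sub>R refl_word e (alt_word n x y) (e y) =
      sin (real (Suc n) * \<theta>) *\<^sub>R e (if even n then y else x)
      + sin (real n * \<theta>) *\<^sub>R e (if even n then x else y)
    \<and> sin \<theta> *\<^sub>R refl_word e (alt_word n x y) (e x) =
      - (sin (real n * \<theta>) *\<^sub>R e (if even n then y else x)
        + sin ((real n - 1) * \<theta>) *\<^sub>R e (if even n then x else y))"
  using assms
proof (induction n arbitrary: x y)
  case (Suc n)
  define A where "A = refl_word e (alt_word n y x)"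
  define P where "P = e (if even n then x else y)"
  define Q where "Q = e (if even n then y else x)"
  have "e y \<bullet> e x = - cos \<theta>" using Suc.prems(3) by (simp add: inner_commute)
  with Suc.IH[OF Suc.prems(2,1)]
  have IH1: "sin \<theta> *\<^sub>R A (e x) = sin (real (Suc n) * \<theta>) *\<^sub>R P + sin (real n * \<theta>) *\<^sub>R Q"
    and IH2: "sin \<theta> *\<^sub>R A (e y) = - (sin (real n * \<theta>) *\<^sub>R P + sin ((real n - 1) * \<theta>) *\<^sub>R Q)"
    unfolding A_def P_def Q_def by (cases "even n"; simp)+
  have P': "e (if even (Suc n) then y else x) = P" and Q': "e (if even (Suc n) then x else y) = Q"
    unfolding P_def Q_def by simp_all
  have rec: "sin (t + \<theta>) = 2 * cos \<theta> * sin t - sin (t - \<theta>)" for t :: real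
    by (simp add: sin_add sin_diff)
  have rec1: "sin (real (Suc (Suc n)) * \<theta>) = 2 * cos \<theta> * sin (real (Suc n) * \<theta>) - sin (real n * \<theta>)"
    using rec[of "Suc n * \<theta>"] by (simp add: algebra_simps)
  have rec2: "sin (real (Suc n) * \<theta>) = 2 * cos \<theta> * sin (real n * \<theta>) - sin ((real n - 1) * \<theta>)"
    using rec[of "n * \<theta>"] by (simp add: algebra_simps)
  have word: "refl_word e (alt_word (Suc n) x y) = A \<circ> reflection (e x)"
    unfolding A_def by simp
  have "reflection (e x) (e y) = e y + (2 * cos \<theta>) *\<^sub>R e x"
    using Suc.prems unfolding reflection_def by (simp add: inner_commute)
  then have "sin \<theta> *\<^sub>R refl_word e (alt_word (Suc n) x y) (e y)
        = sin \<theta> *\<^sub>R A (e y) + (2 * cos \<theta>) *\<^sub>R (sin \<theta> *\<^sub>R A (e x))"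
    using linear_refl_word[of e "alt_word n y x"] unfolding word A_def
    by (simp add: linear_add linear_scale scaleR_add_right)
  also have "\<dots> = (2 * cos \<theta> * sin (real (Suc n) * \<theta>) - sin (real n * \<theta>)) *\<^sub>R P
      + (2 * cos \<theta> * sin (real n * \<theta>) - sin ((real n - 1) * \<theta>)) *\<^sub>R Q"
    unfolding IH1 IH2 by (simp add: algebra_simps)
  finally have "sin \<theta> *\<^sub>R refl_word e (alt_word (Suc n) x y) (e y)
      = sin (real (Suc (Suc n)) * \<theta>) *\<^sub>R P + sin (real (Suc n) * \<theta>) *\<^sub>R Q"
    unfolding rec1 rec2 .
  moreover have "sin \<theta> *\<^sub>R refl_word e (alt_word (Suc n) x y) (e x) = - (sin \<theta> *\<^sub>R A (e x))"
    using linear_refl_word[of e "alt_word n y x"] unfolding word A_def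
    by (simp add: reflection_self linear_neg)
  ultimately show ?case
    unfolding IH1 P' Q' by simp
qed simp

lemma alt_word_braid_simple_root:
  fixes e :: "'s \<Rightarrow> 'a::real_inner"
  assumes "e x \<bullet> e x = 1" "e y \<bullet> e y = 1" "e x \<bullet> e y = - cos (pi / m)" "m \<ge> 2"
  shows "refl_word e (alt_word m x y) (e y) = refl_word e (alt_word m y x) (e y)"
proof -
  define \<theta> where "\<theta> = pi / m"
  have "0 < \<theta>" "\<theta> < pi" using assms(4) unfolding \<theta>_def by (simp_all add: field_simps)
  then have "sin \<theta> > 0" by (rule sin_gt_zero)
  have "real m * \<theta> = pi" using assms(4) unfolding \<theta>_def by simp
  then have "sin (real m * \<theta>) = 0" "sin (real (Suc m) * \<theta>) = - sin \<theta>"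
    "sin ((real m - 1) * \<theta>) = sin \<theta>"
    by (simp_all add: algebra_simps)
  moreover have "e y \<bullet> e x = - cos \<theta>" using assms(3) by (simp add: inner_commute \<theta>_def)
  ultimately have
    "sin \<theta> *\<^sub>R refl_word e (alt_word m x y) (e y) = - (sin \<theta> *\<^sub>R e (if even m then y else x))"
    "sin \<theta> *\<^sub>R refl_word e (alt_word m y x) (e y) = - (sin \<theta> *\<^sub>R e (if even m then y else x))"
    using conjunct1[OF alt_word_simple_root[of e x y \<theta> m, OF assms(1,2) assms(3)[folded \<theta>_def]]]
      conjunct2[OF alt_word_simple_root[of e y x \<theta> m, OF assms(2,1)]]
    by simp_all
  then have "sin \<theta> *\<^sub>R refl_word e (alt_word m x y) (e y)
      = sin \<theta> *\<^sub>R refl_word e (alt_word m y x) (e y)"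
    by simp
  then show ?thesis using \<open>sin \<theta> > 0\<close> by simp
qed

lemma braid_relation:
  fixes e :: "'s \<Rightarrow> 'a::euclidean_space"
  assumes "e x \<bullet> e x = 1" "e y \<bullet> e y = 1" "e x \<bullet> e y = - cos (pi / m)" "m \<ge> 2"
  shows "refl_word e (alt_word m x y) = refl_word e (alt_word m y x)"
proof (rule linear_eq_on_span_and_complement[OF linear_refl_word linear_refl_word])
  fix b assume "b \<in> {e x, e y}"
  moreover have "e y \<bullet> e x = - cos (pi / m)" using assms(3) by (simp add: inner_commute)
  ultimately show "refl_word e (alt_word m x y) b = refl_word e (alt_word m y x) b"
    using alt_word_braid_simple_root[of e x y m, OF assms] alt_word_braid_simple_root[of e y x m]
      assms
    by auto
next
  fix q assume "\<forall>b\<in>{e x, e y}. q \<bullet> b = 0"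
  then have "\<forall>s\<in>set (alt_word m x y). q \<bullet> e s = 0" "\<forall>s\<in>set (alt_word m y x). q \<bullet> e s = 0"
    using set_alt_word[of m x y] set_alt_word[of m y x] by auto
  then show "refl_word e (alt_word m x y) q = refl_word e (alt_word m y x) q"
    by (simp add: refl_word_fixes)
qed

lemma reduced_dihedral_element:
  assumes "e s \<noteq> 0" "e t \<noteq> 0" "u \<in> coxeter_group {s, t} e"
    and "coxeter_length {s, t} e u \<le> coxeter_length {s, t} e (u \<circ> reflection (e s))"
  shows "u = refl_word e (alt_word (coxeter_length {s, t} e u) t s)"
proof -
  obtain ws where ws: "set ws \<subseteq> {s, t}" "length ws = coxeter_length {s, t} e u" "refl_word e ws = u"
    using assms(3) by (rule obtain_reduced_word)
  show ?thesis
  proof (cases "ws = []")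
    case False
    have "last ws \<noteq> s"
    proof
      assume "last ws = s"
      then have "ws = butlast ws @ [s]" using False by (metis append_butlast_last_id)
      then have "u \<circ> reflection (e s) = refl_word e (butlast ws)"
        using ws(3) assms(1)
        by (metis refl_word_append refl_word_Cons refl_word_Nil comp_id comp_assoc
            reflection_comp_reflection)
      then have "coxeter_length {s, t} e (u \<circ> reflection (e s)) \<le> length (butlast ws)"
        using ws(1) in_set_butlastD by (metis coxeter_length_le subset_code(1))
      moreover have "length ws > 0" using False by simp
      ultimately show False using assms(4) ws(2) by simp
    qed
    then have "last ws = t" using ws(1) last_in_set[OF False] by auto
    moreover have "distinct_adj ws"
      by (rule reduced_word_distinct_adj[of ws "{s, t}"]) (use ws assms(1,2) in auto)
    moreover have "set ws \<subseteq> {t, s}" using ws(1) by auto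
    ultimately show ?thesis using distinct_adj_eq_alt_word[of ws t s] ws(2,3) False by simp
  qed (use ws in simp)
qed

text \<open>A reduced alternating word ending in \<open>t\<close> that cannot be shortened by appending \<open>s\<close>
  is shorter than \<open>m\<close>: otherwise its last \<open>m\<close> letters could be braided into a word ending
  in \<open>s\<close>.\<close>

lemma dihedral_reduced_length_less:
  fixes e :: "'s \<Rightarrow> 'a::euclidean_space" and m k :: nat
  assumes "e s \<bullet> e s = 1" "e t \<bullet> e t = 1" "e t \<bullet> e s = - cos (pi / m)" "m \<ge> 2"
    and "k \<le> coxeter_length {s, t} e (refl_word e (alt_word k t s) \<circ> reflection (e s))"
  shows "k < m"
proof (rule ccontr)
  assume "\<not> k < m"
  define pre where "pre = take (k - m) (alt_word k t s)"
  have "alt_word k t s = pre @ alt_word m t s"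
    unfolding pre_def using drop_alt_word[of "k - m" k t s] \<open>\<not> k < m\<close>
    by (metis append_take_drop_id diff_diff_cancel diff_le_self not_less)
  moreover have "refl_word e (alt_word m t s) = refl_word e (alt_word m s t)"
    using assms(1-4) by (intro braid_relation) auto
  moreover have "alt_word m s t = alt_word (m - 1) t s @ [s]"
    using assms(4) by (metis Suc_diff_1 alt_word.simps(2) not_numeral_le_zero not_gr0)
  moreover have "e s \<noteq> 0" using assms(1) by auto
  ultimately have
    "refl_word e (alt_word k t s) \<circ> reflection (e s) = refl_word e (pre @ alt_word (m - 1) t s)"
    by (simp add: comp_assoc reflection_comp_reflection)
  moreover have "set (pre @ alt_word (m - 1) t s) \<subseteq> {s, t}"
    using set_alt_word[of k t s] set_alt_word[of "m - 1" t s] unfolding pre_def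
    by (auto dest: in_set_takeD)
  ultimately have "k \<le> length (pre @ alt_word (m - 1) t s)"
    using assms(5) coxeter_length_le order_trans by metis
  then show False using \<open>\<not> k < m\<close> assms(4) unfolding pre_def by simp
qed

lemma dihedral_simple_root_nonneg:
  fixes e :: "'s \<Rightarrow> 'a::euclidean_space" and m :: nat
  assumes "e s \<bullet> e s = 1" "e t \<bullet> e t = 1" "e t \<bullet> e s = - cos (pi / m)" "m \<ge> 2"
    and "u \<in> coxeter_group {s, t} e"
    and "coxeter_length {s, t} e u \<le> coxeter_length {s, t} e (u \<circ> reflection (e s))"
  obtains a b where "a \<ge> 0" "b \<ge> 0" "u (e s) = a *\<^sub>R e s + b *\<^sub>R e t"
proof -
  define k where "k = coxeter_length {s, t} e u"
  have u: "u = refl_word e (alt_word k t s)"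
    unfolding k_def using assms(1,2,5,6) by (intro reduced_dihedral_element) auto
  have "k \<le> coxeter_length {s, t} e (u \<circ> reflection (e s))"
    using assms(6) unfolding k_def .
  then have "k < m"
    using dihedral_reduced_length_less[of e s t m k] assms(1-4) unfolding u by blast
  define \<theta> where "\<theta> = pi / m"
  have "0 < \<theta>" "\<theta> < pi" using assms(4) unfolding \<theta>_def by (simp_all add: field_simps)
  then have "sin \<theta> > 0" by (rule sin_gt_zero)
  have "pi * real (Suc k) \<le> pi * real m"
    using \<open>k < m\<close> by (intro mult_left_mono) auto
  then have "real (Suc k) * \<theta> \<le> pi"
    using assms(4) unfolding \<theta>_def by (simp add: field_simps)
  moreover from this have "real k * \<theta> \<le> pi"
    using \<open>0 < \<theta>\<close> by (simp add: distrib_right)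
  ultimately have "sin (real (Suc k) * \<theta>) \<ge> 0" "sin (real k * \<theta>) \<ge> 0"
    using \<open>0 < \<theta>\<close> by (simp_all add: sin_ge_zero)
  then have nonneg: "sin (real (Suc k) * \<theta>) / sin \<theta> \<ge> 0" "sin (real k * \<theta>) / sin \<theta> \<ge> 0"
    using \<open>sin \<theta> > 0\<close> by simp_all
  define P Q where "P = e (if even k then s else t)" and "Q = e (if even k then t else s)"
  have "sin \<theta> *\<^sub>R u (e s) = sin (real (Suc k) * \<theta>) *\<^sub>R P + sin (real k * \<theta>) *\<^sub>R Q"
    using alt_word_simple_root[of e t s \<theta> k] assms(1-3) unfolding u \<theta>_def P_def Q_def by simp
  then have "u (e s) = inverse (sin \<theta>) *\<^sub>R (sin (real (Suc k) * \<theta>) *\<^sub>R P + sin (real k * \<theta>) *\<^sub>R Q)"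
    using \<open>sin \<theta> > 0\<close> by (metis less_irrefl scaleR_one scaleR_scaleR left_inverse)
  then have "u (e s) = (sin (real (Suc k) * \<theta>) / sin \<theta>) *\<^sub>R P + (sin (real k * \<theta>) / sin \<theta>) *\<^sub>R Q"
    by (simp only: scaleR_add_right scaleR_scaleR divide_inverse mult.commute)
  with nonneg that show ?thesis
    unfolding P_def Q_def by (cases "even k") (simp_all add: add.commute)
qed

section \<open>Roots are nonnegative or nonpositive combinations of simple roots\<close>

locale coxeter_realisation =
  fixes S :: "'s set" and m :: "'s \<Rightarrow> 's \<Rightarrow> nat" and e :: "'s \<Rightarrow> 'a::euclidean_space"
  assumes realisation: "geometric_realisation S m e"
begin

abbreviation G :: "('a \<Rightarrow> 'a) set" where
  "G \<equiv> coxeter_group S e"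

abbreviation len :: "('a \<Rightarrow> 'a) \<Rightarrow> nat" where
  "len \<equiv> coxeter_length S e"

lemma finite_S: "finite S"
  and inj_on_e: "inj_on e S"
  and independent_e: "independent (e ` S)"
  and span_e: "span (e ` S) = UNIV"
  and unit_e: "s \<in> S \<Longrightarrow> e s \<bullet> e s = 1"
  using realisation unfolding geometric_realisation_def by simp_all

lemma simple_roots_angle:
  "s \<in> S \<Longrightarrow> t \<in> S \<Longrightarrow> s \<noteq> t \<Longrightarrow> m s t \<ge> 2 \<and> e s \<bullet> e t = - cos (pi / m s t)"
  using realisation unfolding geometric_realisation_def by blast

lemma e_nonzero: "s \<in> S \<Longrightarrow> e s \<noteq> 0"
  using unit_e by fastforce

lemma orthogonal_transformation_parabolic:
  "I \<subseteq> S \<Longrightarrow> g \<in> coxeter_group I e \<Longrightarrow> orthogonal_transformation g"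
  using e_nonzero by (blast intro: orthogonal_transformation_coxeter_group)

lemma inv_in_parabolic: "I \<subseteq> S \<Longrightarrow> g \<in> coxeter_group I e \<Longrightarrow> inv g \<in> coxeter_group I e"
  using e_nonzero by (blast intro: inv_in_coxeter_group)

definition coord :: "'a \<Rightarrow> 's \<Rightarrow> real" where
  "coord v s = representation (e ` S) v (e s)"

lemma coord_add: "coord (u + v) s = coord u s + coord v s"
  unfolding coord_def using independent_e span_e by (simp add: representation_add)

lemma coord_scaleR: "coord (c *\<^sub>R v) s = c * coord v s"
  unfolding coord_def using independent_e span_e by (simp add: representation_scale)

lemma coord_uminus: "coord (- v) s = - coord v s"
  unfolding coord_def using independent_e span_e by (simp add: representation_neg)

lemma coord_diff: "coord (u - v) s = coord u s - coord v s"
  unfolding coord_def using independent_e span_e by (simp add: representation_diff)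

lemma coord_simple: "s \<in> S \<Longrightarrow> t \<in> S \<Longrightarrow> coord (e t) s = (if s = t then 1 else 0)"
  unfolding coord_def using independent_e inj_on_e
  by (simp add: representation_basis inj_on_eq_iff)

lemma sum_coord: "(\<Sum>s\<in>S. coord v s *\<^sub>R e s) = v"
proof -
  have "(\<Sum>s\<in>S. coord v s *\<^sub>R e s) = (\<Sum>b\<in>e ` S. representation (e ` S) v b *\<^sub>R b)"
    unfolding coord_def by (simp add: sum.reindex[OF inj_on_e])
  also have "\<dots> = v"
    using independent_e span_e finite_S by (simp add: sum_representation_eq)
  finally show ?thesis .
qed

lemma coord_outside:
  assumes "J \<subseteq> S" "v \<in> span (e ` J)" "s \<in> S - J"
  shows "coord v s = 0"
proof (rule ccontr)
  assume "coord v s \<noteq> 0"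
  then have "representation (e ` J) v (e s) \<noteq> 0"
    unfolding coord_def using representation_extend[OF independent_e assms(2)] assms(1)
    by (simp add: image_mono)
  then have "e s \<in> e ` J" by (rule representation_ne_zero)
  then show False using assms inj_on_e by (auto simp: inj_on_image_mem_iff)
qed

definition nonneg_comb :: "'a \<Rightarrow> bool" where
  "nonneg_comb v \<longleftrightarrow> (\<forall>s\<in>S. 0 \<le> coord v s)"

lemma nonneg_comb_add: "nonneg_comb u \<Longrightarrow> nonneg_comb v \<Longrightarrow> nonneg_comb (u + v)"
  unfolding nonneg_comb_def by (simp add: coord_add)

lemma nonneg_comb_scaleR: "nonneg_comb v \<Longrightarrow> 0 \<le> c \<Longrightarrow> nonneg_comb (c *\<^sub>R v)"
  unfolding nonneg_comb_def by (simp add: coord_scaleR)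

lemma nonneg_comb_simple: "t \<in> S \<Longrightarrow> nonneg_comb (e t)"
  unfolding nonneg_comb_def by (simp add: coord_simple)

lemma parabolic_factorisation:
  assumes "I \<subseteq> S" "v0 \<in> G" "u0 \<in> coxeter_group I e" "w = v0 \<circ> u0"
    and "len v0 + coxeter_length I e u0 \<le> len w"
  obtains v u where "v \<in> G" "u \<in> coxeter_group I e" "w = v \<circ> u"
    "len v + coxeter_length I e u \<le> len w" "len v \<le> len v0"
    "\<And>x. x \<in> I \<Longrightarrow> len v \<le> len (v \<circ> reflection (e x))"
proof -
  define A where "A = {(v, u). v \<in> G \<and> u \<in> coxeter_group I e \<and> w = v \<circ> u
    \<and> len v + coxeter_length I e u \<le> len w}"
  have "(v0, u0) \<in> A" using assms unfolding A_def by simp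
  then obtain vu where "vu \<in> A" and min: "\<And>y. y \<in> A \<Longrightarrow> len (fst vu) \<le> len (fst y)"
    using ex_has_least_nat[of "\<lambda>p. p \<in> A" "(v0, u0)" "\<lambda>p. len (fst p)"] by blast
  obtain v u where vu: "vu = (v, u)" by (cases vu)
  have v: "v \<in> G" "u \<in> coxeter_group I e" "w = v \<circ> u" "len v + coxeter_length I e u \<le> len w"
    using \<open>vu \<in> A\<close> unfolding vu A_def by blast+
  have "len v \<le> len (v \<circ> reflection (e x))" if "x \<in> I" for x
  proof (rule ccontr)
    assume shorter: "\<not> ?thesis"
    have "x \<in> S" using that assms(1) by blast
    have rx: "reflection (e x) \<in> coxeter_group I e" using that by (rule reflection_in_coxeter_group)
    have "(v \<circ> reflection (e x)) \<circ> (reflection (e x) \<circ> u)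
        = v \<circ> (reflection (e x) \<circ> reflection (e x)) \<circ> u"
      by (simp add: comp_assoc)
    also have "\<dots> = w" using v(3) e_nonzero[OF \<open>x \<in> S\<close>] by (simp add: reflection_comp_reflection)
    finally have "(v \<circ> reflection (e x), reflection (e x) \<circ> u) \<in> A"
      using coxeter_length_comp[OF rx v(2)] coxeter_length_reflection[OF that, of e] v shorter
        coxeter_group_comp[OF v(1) reflection_in_coxeter_group[OF \<open>x \<in> S\<close>]]
        coxeter_group_comp[OF rx v(2)]
      unfolding A_def by auto
    then show False using min shorter unfolding vu by fastforce
  qed
  moreover have "len v \<le> len v0" using min[OF \<open>(v0, u0) \<in> A\<close>] unfolding vu by simp
  ultimately show ?thesis using that v by blast
qed

lemma parabolic_factor_length_le:
  assumes "I \<subseteq> S" "s \<in> I" "v \<in> G" "u \<in> coxeter_group I e" "w = v \<circ> u"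
    and "len v + coxeter_length I e u \<le> len w" "len w \<le> len (w \<circ> reflection (e s))"
  shows "coxeter_length I e u \<le> coxeter_length I e (u \<circ> reflection (e s))"
proof -
  have us: "u \<circ> reflection (e s) \<in> coxeter_group I e"
    using assms(2,4) by (simp add: coxeter_group_comp reflection_in_coxeter_group)
  then have "u \<circ> reflection (e s) \<in> G" using assms(1) coxeter_group_mono by blast
  then have "len (w \<circ> reflection (e s)) \<le> len v + len (u \<circ> reflection (e s))"
    using coxeter_length_comp[OF assms(3)] assms(5) by (simp add: comp_assoc)
  also have "len (u \<circ> reflection (e s)) \<le> coxeter_length I e (u \<circ> reflection (e s))"
    using us assms(1) by (rule coxeter_length_mono)
  finally show ?thesis using assms(6,7) by simp
qed

lemma nonneg_comb_if_length_le:
  "w \<in> G \<Longrightarrow> s \<in> S \<Longrightarrow> len w \<le> len (w \<circ> reflection (e s)) \<Longrightarrow> nonneg_comb (w (e s))"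
proof (induction "len w" arbitrary: w s rule: less_induct)
  case less
  show ?case
  proof (cases "w = id")
    case True
    then show ?thesis using nonneg_comb_simple[OF less.prems(2)] by simp
  next
    case False
    with less.prems(1) obtain v0 t where "t \<in> S" "v0 \<in> G" and w: "w = v0 \<circ> reflection (e t)"
      and "len v0 < len w"
      by (rule obtain_shorter_prefix)
    have "t \<noteq> s"
    proof
      assume "t = s"
      then have "w \<circ> reflection (e s) = v0"
        using w e_nonzero[OF \<open>t \<in> S\<close>] by (simp add: comp_assoc reflection_comp_reflection)
      then show False using less.prems(3) \<open>len v0 < len w\<close> by simp
    qed
    obtain v u where v: "v \<in> G" "u \<in> coxeter_group {s, t} e" "w = v \<circ> u"
      "len v + coxeter_length {s, t} e u \<le> len w" "len v \<le> len v0"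
      and v_min: "\<And>x. x \<in> {s, t} \<Longrightarrow> len v \<le> len (v \<circ> reflection (e x))"
    proof (rule parabolic_factorisation[of "{s, t}" v0 "reflection (e t)" w])
      show "len v0 + coxeter_length {s, t} e (reflection (e t)) \<le> len w"
        using coxeter_length_reflection[of t "{s, t}" e] \<open>len v0 < len w\<close> by simp
    qed (use less.prems(2) \<open>t \<in> S\<close> \<open>v0 \<in> G\<close> w in \<open>auto intro: reflection_in_coxeter_group\<close>)
    have "len v < len w" using v(5) \<open>len v0 < len w\<close> by simp
    then have "nonneg_comb (v (e s))" "nonneg_comb (v (e t))"
      using less.hyps v(1) v_min less.prems(2) \<open>t \<in> S\<close> by blast+
    moreover obtain a b where "a \<ge> 0" "b \<ge> 0" "u (e s) = a *\<^sub>R e s + b *\<^sub>R e t"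
    proof (rule dihedral_simple_root_nonneg[of e s t "m t s" u])
      show "coxeter_length {s, t} e u \<le> coxeter_length {s, t} e (u \<circ> reflection (e s))"
        using less.prems v \<open>t \<in> S\<close> by (intro parabolic_factor_length_le[of "{s, t}" s v u w]) auto
    qed (use simple_roots_angle[OF \<open>t \<in> S\<close> less.prems(2) \<open>t \<noteq> s\<close>] unit_e less.prems(2) \<open>t \<in> S\<close> v(2)
      in auto)
    moreover have "linear v" using v(1) orthogonal_transformation_parabolic
      by (blast intro: orthogonal_transformation_linear)
    ultimately show ?thesis
      using v(3) by (simp add: linear_add linear_scale nonneg_comb_add nonneg_comb_scaleR)
  qed
qed

lemma nonneg_or_nonpos_comb:
  assumes "w \<in> G" "s \<in> S"
  shows "nonneg_comb (w (e s)) \<or> nonneg_comb (- w (e s))"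
proof (cases "len w \<le> len (w \<circ> reflection (e s))")
  case True
  then show ?thesis using assms nonneg_comb_if_length_le by blast
next
  case False
  have ws: "w \<circ> reflection (e s) \<in> G"
    using assms by (simp add: coxeter_group_comp reflection_in_coxeter_group)
  have "w \<circ> reflection (e s) \<circ> reflection (e s) = w"
    using e_nonzero[OF assms(2)] by (simp add: comp_assoc reflection_comp_reflection)
  then have "nonneg_comb ((w \<circ> reflection (e s)) (e s))"
    using nonneg_comb_if_length_le[OF ws assms(2)] False by simp
  moreover have "linear w" using assms(1) orthogonal_transformation_parabolic
    by (blast intro: orthogonal_transformation_linear)
  ultimately show ?thesis by (simp add: reflection_self linear_neg)
qed

section \<open>Roots lying in a parabolic subspace\<close>

definition roots :: "'a set" where
  "roots = {g (e t) | g t. g \<in> G \<and> t \<in> S}"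

lemma finite_roots: "finite G \<Longrightarrow> finite roots"
proof -
  assume "finite G"
  moreover have "roots = (\<lambda>(g, t). g (e t)) ` (G \<times> S)" unfolding roots_def by auto
  ultimately show ?thesis using finite_S by simp
qed

lemma root_unit: "\<alpha> \<in> roots \<Longrightarrow> \<alpha> \<bullet> \<alpha> = 1"
  unfolding roots_def
  using orthogonal_transformation_parabolic[of S] unit_e
  by (auto simp: orthogonal_transformation_def)

lemma reflection_simple_root_in_roots:
  assumes "\<alpha> \<in> roots" "u \<in> S"
  shows "reflection (e u) \<alpha> \<in> roots"
proof -
  obtain g t where "g \<in> G" "t \<in> S" "\<alpha> = g (e t)" using assms(1) unfolding roots_def by blast
  moreover have "reflection (e u) \<circ> g \<in> G"
    using \<open>g \<in> G\<close> assms(2) by (simp add: coxeter_group_comp reflection_in_coxeter_group)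
  ultimately have "reflection (e u) \<alpha> = (reflection (e u) \<circ> g) (e t)" "reflection (e u) \<circ> g \<in> G"
    by simp_all
  then show ?thesis unfolding roots_def using \<open>t \<in> S\<close> by blast
qed

lemma uminus_root: "\<alpha> \<in> roots \<Longrightarrow> - \<alpha> \<in> roots"
proof -
  assume "\<alpha> \<in> roots"
  then obtain g t where "g \<in> G" "t \<in> S" "\<alpha> = g (e t)" unfolding roots_def by blast
  moreover have "linear g" using \<open>g \<in> G\<close> orthogonal_transformation_parabolic
    by (blast intro: orthogonal_transformation_linear)
  ultimately have "- \<alpha> = (g \<circ> reflection (e t)) (e t)" "g \<circ> reflection (e t) \<in> G"
    by (simp_all add: reflection_self linear_neg coxeter_group_comp reflection_in_coxeter_group)
  then show "- \<alpha> \<in> roots" unfolding roots_def using \<open>t \<in> S\<close> by blast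
qed

lemma root_nonneg_or_nonpos: "\<alpha> \<in> roots \<Longrightarrow> nonneg_comb \<alpha> \<or> nonneg_comb (- \<alpha>)"
  unfolding roots_def using nonneg_or_nonpos_comb by blast

definition height :: "'a \<Rightarrow> real" where
  "height v = (\<Sum>s\<in>S. coord v s)"

lemma reflection_simple_root_eq: "u \<in> S \<Longrightarrow> reflection (e u) v = v - (2 * (v \<bullet> e u)) *\<^sub>R e u"
  unfolding reflection_def by (simp add: unit_e)

lemma height_reflection_simple_root:
  assumes "u \<in> S"
  shows "height (reflection (e u) v) = height v - 2 * (v \<bullet> e u)"
  using assms finite_S
  by (simp add: height_def reflection_simple_root_eq coord_diff coord_scaleR coord_simple
      sum_subtractf if_distrib[of "\<lambda>x. _ * x"] cong: if_cong)

lemma coord_reflection_simple_root: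
  "u \<in> S \<Longrightarrow> s \<in> S \<Longrightarrow> s \<noteq> u \<Longrightarrow> coord (reflection (e u) v) s = coord v s"
  by (simp add: reflection_simple_root_eq coord_diff coord_scaleR coord_simple)

lemma exists_acute_simple_root:
  assumes "nonneg_comb \<alpha>" "\<alpha> \<noteq> 0"
  obtains u where "u \<in> S" "0 < coord \<alpha> u" "0 < \<alpha> \<bullet> e u"
proof (rule ccontr)
  assume "\<not> thesis"
  with that have "coord \<alpha> s * (\<alpha> \<bullet> e s) \<le> 0" if "s \<in> S" for s
    using assms(1) \<open>s \<in> S\<close> unfolding nonneg_comb_def
    by (metis less_eq_real_def mult_nonneg_nonpos mult_zero_left not_less)
  then have "(\<Sum>s\<in>S. coord \<alpha> s * (\<alpha> \<bullet> e s)) \<le> 0" by (rule sum_nonpos)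
  moreover have "\<alpha> \<bullet> \<alpha> = (\<Sum>s\<in>S. coord \<alpha> s * (\<alpha> \<bullet> e s))"
    by (subst (2) sum_coord[symmetric]) (simp add: inner_sum_right)
  ultimately show False using assms(2) inner_gt_zero_iff[of \<alpha>] by linarith
qed

lemma nonneg_comb_reflection_simple_root:
  assumes "\<alpha> \<in> roots" "nonneg_comb \<alpha>" "u \<in> S" "\<alpha> \<noteq> e u"
  shows "nonneg_comb (reflection (e u) \<alpha>)"
proof -
  have "\<exists>v\<in>S. v \<noteq> u \<and> 0 < coord \<alpha> v"
  proof (rule ccontr)
    assume "\<not> ?thesis"
    then have "coord \<alpha> v = 0" if "v \<in> S - {u}" for v
      using assms(2) that unfolding nonneg_comb_def by force
    then have "\<alpha> = coord \<alpha> u *\<^sub>R e u"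
      using sum_coord[of \<alpha>] sum.remove[OF finite_S assms(3), of "\<lambda>s. coord \<alpha> s *\<^sub>R e s"] by simp
    moreover from this have "(coord \<alpha> u)\<^sup>2 = 1"
      using root_unit[OF assms(1)] unit_e[OF assms(3)]
      by (metis inner_scaleR_left inner_scaleR_right mult.right_neutral power2_eq_square)
    moreover have "coord \<alpha> u \<ge> 0" using assms(2,3) unfolding nonneg_comb_def by blast
    ultimately show False using assms(4) by (auto simp: power2_eq_1_iff)
  qed
  then obtain v where "v \<in> S" "v \<noteq> u" "0 < coord (reflection (e u) \<alpha>) v"
    using assms(3) coord_reflection_simple_root by auto
  then have "\<not> nonneg_comb (- reflection (e u) \<alpha>)"
    unfolding nonneg_comb_def by (force simp: coord_uminus)
  then show ?thesis
    using root_nonneg_or_nonpos reflection_simple_root_in_roots assms(1,3) by blast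
qed

lemma reflection_nonneg_root_in_parabolic:
  assumes "finite G" "J \<subseteq> S"
  shows "\<alpha> \<in> roots \<Longrightarrow> nonneg_comb \<alpha> \<Longrightarrow> \<alpha> \<in> span (e ` J) \<Longrightarrow> reflection \<alpha> \<in> coxeter_group J e"
proof (induction "card {\<gamma> \<in> roots. height \<gamma> < height \<alpha>}" arbitrary: \<alpha> rule: less_induct)
  case less
  have "\<alpha> \<noteq> 0" using root_unit[OF less.prems(1)] by auto
  with less.prems(2) obtain u where u: "u \<in> S" "0 < coord \<alpha> u" "0 < \<alpha> \<bullet> e u"
    by (rule exists_acute_simple_root)
  have "u \<in> J" using coord_outside[OF assms(2) less.prems(3)] u by force
  show ?case
  proof (cases "\<alpha> = e u")
    case True
    then show ?thesis using \<open>u \<in> J\<close> by (simp add: reflection_in_coxeter_group)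
  next
    case False
    define \<beta> where "\<beta> = reflection (e u) \<alpha>"
    have \<beta>: "\<beta> \<in> roots" "nonneg_comb \<beta>"
      using less.prems u False unfolding \<beta>_def
      by (simp_all add: reflection_simple_root_in_roots nonneg_comb_reflection_simple_root)
    have "\<beta> \<in> span (e ` J)"
      using less.prems(3) \<open>u \<in> J\<close> u(1) unfolding \<beta>_def
      by (simp add: reflection_simple_root_eq span_diff span_scale span_base)
    have "height \<beta> < height \<alpha>"
      using u unfolding \<beta>_def by (simp add: height_reflection_simple_root)
    then have "{\<gamma> \<in> roots. height \<gamma> < height \<beta>} \<subset> {\<gamma> \<in> roots. height \<gamma> < height \<alpha>}"
      using \<beta>(1) by auto
    then have "card {\<gamma> \<in> roots. height \<gamma> < height \<beta>} < card {\<gamma> \<in> roots. height \<gamma> < height \<alpha>}"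
      using finite_roots[OF assms(1)] by (simp add: psubset_card_mono)
    then have "reflection \<beta> \<in> coxeter_group J e" using less.hyps \<beta> \<open>\<beta> \<in> span (e ` J)\<close> by blast
    moreover have "reflection \<alpha> = reflection (e u) \<circ> reflection \<beta> \<circ> reflection (e u)"
      using reflection_conjugate[of "reflection (e u)" \<beta>] e_nonzero[OF u(1)]
      by (simp add: \<beta>_def orthogonal_transformation_reflection inv_reflection reflection_reflection
          bij_is_surj o_bij[OF reflection_comp_reflection reflection_comp_reflection])
    ultimately show ?thesis
      using \<open>u \<in> J\<close> by (simp add: coxeter_group_comp reflection_in_coxeter_group)
  qed
qed

lemma reflection_root_in_parabolic:
  assumes "finite G" "J \<subseteq> S" "\<alpha> \<in> roots" "\<alpha> \<in> span (e ` J)"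
  shows "reflection \<alpha> \<in> coxeter_group J e"
  using root_nonneg_or_nonpos[OF assms(3)]
proof
  assume "nonneg_comb (- \<alpha>)"
  with assms have "reflection (- \<alpha>) \<in> coxeter_group J e"
    by (intro reflection_nonneg_root_in_parabolic) (simp_all add: uminus_root span_neg)
  then show ?thesis by (simp add: reflection_uminus)
qed (use assms reflection_nonneg_root_in_parabolic in blast)

section \<open>Centraliser and normaliser\<close>

lemma fixed_by_parabolic_iff:
  assumes "J \<subseteq> S"
  shows "(\<forall>h\<in>coxeter_group J e. h q = q) \<longleftrightarrow> (\<forall>s\<in>J. q \<bullet> e s = 0)"
  using assms e_nonzero reflection_in_coxeter_group[of _ J e] reflection_fixed_iff
  by (blast intro: coxeter_group_fixes)

lemma normalises_parabolic_if_commutes: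
  assumes "finite G" "J \<subseteq> S" "\<sigma> \<in> coxeter_group J e" "\<And>v. v \<in> span (e ` J) \<Longrightarrow> \<sigma> v = - v"
    and "g \<in> G" "g \<circ> \<sigma> = \<sigma> \<circ> g"
  shows "(\<lambda>h. g \<circ> h \<circ> inv g) ` coxeter_group J e = coxeter_group J e"
proof -
  have "linear \<sigma>"
    using assms(2,3) orthogonal_transformation_parabolic orthogonal_transformation_linear by blast
  have conj: "(\<lambda>h. f \<circ> h \<circ> inv f) ` coxeter_group J e \<subseteq> coxeter_group J e"
    if "f \<in> G" "f \<circ> \<sigma> = \<sigma> \<circ> f" for f
  proof (rule conj_coxeter_group_subset)
    have f: "orthogonal_transformation f" using \<open>f \<in> G\<close> orthogonal_transformation_parabolic by blast
    then show "bij f" by (rule orthogonal_transformation_bij)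
    fix t assume "t \<in> J"
    then have "\<sigma> (f (e t)) = - f (e t)"
      using fun_cong[OF that(2), of "e t"] assms(4) f
      by (simp add: span_base orthogonal_transformation_linear linear_neg)
    then have "f (e t) \<in> span (e ` J)"
      using \<open>linear \<sigma>\<close> assms(3,4) coxeter_group_fixes[OF assms(3)]
      by (intro neg_eigenvector_in_span[of \<sigma>]) auto
    moreover have "f (e t) \<in> roots" unfolding roots_def using \<open>f \<in> G\<close> \<open>t \<in> J\<close> assms(2) by blast
    ultimately have "reflection (f (e t)) \<in> coxeter_group J e"
      by (intro reflection_root_in_parabolic[OF assms(1,2)])
    then show "f \<circ> reflection (e t) \<circ> inv f \<in> coxeter_group J e"
      using f by (simp add: reflection_conjugate orthogonal_transformation_surj)
  qed
  have "bij g"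
    using assms(5) orthogonal_transformation_parabolic orthogonal_transformation_bij by blast
  then have "inv g \<circ> \<sigma> = \<sigma> \<circ> inv g"
    using assms(6) by (rule inv_commute)
  moreover have "inv g \<in> G" using assms(5) by (simp add: inv_in_parabolic)
  ultimately show ?thesis
    using conj_image_eq[OF \<open>bij g\<close>] conj[OF assms(5,6)] conj[of "inv g"] \<open>bij g\<close>
    by (simp add: inv_inv_eq)
qed

lemma conj_parabolic_preserves_complement:
  assumes "J \<subseteq> S" "bij g" "(\<lambda>h. g \<circ> h \<circ> inv g) ` coxeter_group J e \<subseteq> coxeter_group J e"
    and "\<forall>s\<in>J. q \<bullet> e s = 0"
  shows "\<forall>s\<in>J. inv g q \<bullet> e s = 0"
  unfolding fixed_by_parabolic_iff[OF assms(1), symmetric]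
proof
  fix h assume "h \<in> coxeter_group J e"
  then have "(g \<circ> h \<circ> inv g) q = q"
    using assms(3,4) fixed_by_parabolic_iff[OF assms(1)] by blast
  then show "h (inv g q) = inv g q"
    using bij_inv_eq_iff[OF assms(2), of "h (inv g q)" q] by simp
qed

lemma commutes_if_normalises_parabolic:
  assumes "J \<subseteq> S" "\<sigma> \<in> coxeter_group J e" "\<And>v. v \<in> span (e ` J) \<Longrightarrow> \<sigma> v = - v"
    and "g \<in> G" "(\<lambda>h. g \<circ> h \<circ> inv g) ` coxeter_group J e = coxeter_group J e"
  shows "g \<circ> \<sigma> = \<sigma> \<circ> g"
proof -
  have g: "orthogonal_transformation g" using assms(4) orthogonal_transformation_parabolic by blast
  then have "bij g" by (rule orthogonal_transformation_bij)
  have inv_g_perp: "\<forall>s\<in>J. inv g q \<bullet> e s = 0" if "\<forall>s\<in>J. q \<bullet> e s = 0" for q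
    using assms(1,5) \<open>bij g\<close> that by (intro conj_parabolic_preserves_complement) auto
  have "(\<lambda>h. inv g \<circ> h \<circ> inv (inv g)) ` coxeter_group J e \<subseteq> coxeter_group J e"
  proof clarify
    fix h assume "h \<in> coxeter_group J e"
    then obtain h' where "h' \<in> coxeter_group J e" "h = g \<circ> h' \<circ> inv g" using assms(5) by blast
    moreover from this(2) have "inv g \<circ> h \<circ> inv (inv g) = h'"
      using \<open>bij g\<close> by (simp add: fun_eq_iff inv_inv_eq bij_is_inj)
    ultimately show "inv g \<circ> h \<circ> inv (inv g) \<in> coxeter_group J e" by simp
  qed
  then have g_perp: "\<forall>s\<in>J. g q \<bullet> e s = 0" if "\<forall>s\<in>J. q \<bullet> e s = 0" for q
    using conj_parabolic_preserves_complement[OF assms(1) bij_imp_bij_inv[OF \<open>bij g\<close>] _ that]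
      \<open>bij g\<close> by (simp add: inv_inv_eq)
  show ?thesis
  proof (rule commute_if_preserves_span_and_complement[of \<sigma> "e ` J" g])
    show "linear \<sigma>"
      using assms(1,2) orthogonal_transformation_parabolic orthogonal_transformation_linear by blast
    show "\<sigma> q = q" if "\<forall>b\<in>e ` J. q \<bullet> b = 0" for q
      using that coxeter_group_fixes[OF assms(2)] by simp
    show "g v \<in> span (e ` J)" if "v \<in> span (e ` J)" for v
    proof (rule in_span_if_orthogonal_to_complement)
      fix q assume "\<forall>b\<in>e ` J. q \<bullet> b = 0"
      then have "orthogonal (inv g q) v"
        using inv_g_perp[of q] by (intro orthogonal_to_span[OF that]) (auto simp: orthogonal_def)
      have "g v \<bullet> q = g v \<bullet> g (inv g q)" using \<open>bij g\<close> by (simp add: bij_is_surj surj_f_inv_f)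
      also have "\<dots> = v \<bullet> inv g q" using g by (simp add: orthogonal_transformation_def)
      finally show "g v \<bullet> q = 0"
        using \<open>orthogonal (inv g q) v\<close> by (simp add: orthogonal_def inner_commute)
    qed
  qed (use assms(3) g_perp g orthogonal_transformation_linear in auto)
qed

end

theorem proposition7:
  fixes S J :: "'s set" and m :: "'s \<Rightarrow> 's \<Rightarrow> nat"
    and e :: "'s \<Rightarrow> 'a::euclidean_space" and \<sigma> :: "'a \<Rightarrow> 'a"
  assumes real: "geometric_realisation S m e"
    and fin: "finite (coxeter_group S e)"
    and JS: "J \<subseteq> S"
    and sigma_in: "\<sigma> \<in> coxeter_group J e"
    and sigma_neg: "\<forall>v\<in>root_span J e. \<sigma> v = - v"
  shows "{g \<in> coxeter_group S e. g \<circ> \<sigma> = \<sigma> \<circ> g}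
       = {g \<in> coxeter_group S e.
            (\<lambda>h. g \<circ> h \<circ> inv g) ` coxeter_group J e = coxeter_group J e}"
proof -
  interpret coxeter_realisation S m e using real by (rule coxeter_realisation.intro)
  have neg: "\<And>v. v \<in> span (e ` J) \<Longrightarrow> \<sigma> v = - v"
    using sigma_neg unfolding root_span_def by blast
  show ?thesis
    using normalises_parabolic_if_commutes[OF fin JS sigma_in neg]
      commutes_if_normalises_parabolic[OF JS sigma_in neg] by blast
qed

end
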